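(* Suppose the $L$-smoothness assumption holds and let $\{w_t\}_{t\ge0}$, $\{v_t\}_{t\ge0}$, $\{\hat D_t\}_{t\ge0}$ be generated by {\tt Scaled SARAH} with any step-size $\eta>0$. Then for every $t\ge0$, $$P(w_{t+1})\le P(w_t)+\frac{\eta}{2\alpha}\|\nabla P(w_t)-v_t\|^2-\left(\frac1{2\eta}-\frac{L}{2\alpha}\right)\|w_{t+1}-w_t\|^2_{\hat D_t}-\frac{\eta}{2}\|\nabla P(w_t)\|^2_{\hat D_t^{-1}}.$$
   Context: $P=\frac1n\sum_{i=1}^nf_i$ with $f_i:\mathbb{R}^d\to\mathbb{R}$. $L$-smoothness assumption: each $f_i$ and $P$ are twice differentiable with $L$-Lipschitz gradients. $\|x\|_D^2=x^TDx$ for positive definite $D$. For $J\subseteq[n]$, $\nabla^2P_J(w)=\frac1{|J|}\sum_{j\in J}\nabla^2 f_j(w)$; $\odot$ is the Hadamard product; $\mathrm{diag}(x)$ is the diagonal matrix with the entries of $x$. Preconditioner (parameters $\alpha>0$, $\beta\in(0,1)$, $m\ge1$): $D_0=\frac1m\sum_{j=1}^m\mathrm{diag}(z_j\odot\nabla^2P_{\mathcal{J}_j}(w_0)z_j)$, $D_t=\beta D_{t-1}+(1-\beta)\mathrm{diag}(z_t\odot\nabla^2P_{\mathcal{J}_t}(w_t)z_t)$ for $t\ge1$, with independent Rademacher vectors $z$ and random index sets $\mathcal{J}\subseteq[n]$; $\hat D_t$ diagonal with $(\hat D_t)_{ii}=\max\{\alpha,|(D_t)_{ii}|\}$. {\tt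 Scaled SARAH} (input $w_0$, $\eta$, $p\in(0,1]$): $v_0=\nabla P(w_0)$; for $t\ge0$: $w_{t+1}=w_t-\eta\hat D_t^{-1}v_t$; draw $i_{t+1}$ uniformly from $[n]$; with probability $p$, $v_{t+1}=\nabla P(w_{t+1})$, otherwise $v_{t+1}=v_t+\nabla f_{i_{t+1}}(w_{t+1})-\nabla f_{i_{t+1}}(w_t)$; update $\hat D_{t+1}$. *)

theory Defs
  imports "HOL-Analysis.Analysis"
begin

definition Pfun :: "nat \<Rightarrow> (nat \<Rightarrow> real^'d \<Rightarrow> real) \<Rightarrow> real^'d \<Rightarrow> real" where
  "Pfun n f w = (1 / real n) * (\<Sum>i<n. f i w)"

definition gradP :: "nat \<Rightarrow> (nat \<Rightarrow> real^'d \<Rightarrow> real^'d) \<Rightarrow> real^'d \<Rightarrow> real^'d" where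
  "gradP n g w = (1 / real n) *\<^sub>R (\<Sum>i<n. g i w)"

definition hessJ :: "(nat \<Rightarrow> real^'d \<Rightarrow> real^'d^'d) \<Rightarrow> nat set \<Rightarrow> real^'d \<Rightarrow> real^'d^'d" where
  "hessJ H J w = (1 / real (card J)) *\<^sub>R (\<Sum>j\<in>J. H j w)"

definition hadamard :: "real^'d \<Rightarrow> real^'d \<Rightarrow> real^'d" where
  "hadamard x y = (\<chi> i. x $ i * y $ i)"

text \<open>Diagonal matrices are represented by the vector of their diagonal entries.
  Clipped preconditioner: (hat D)_ii = max alpha |D_ii|.\<close>
definition clipD :: "real \<Rightarrow> real^'d \<Rightarrow> real^'d" where
  "clipD \<alpha> D = (\<chi> i. max \<alpha> \<bar>D $ i\<bar>)"

definition diag_inv_apply :: "real^'d \<Rightarrow> real^'d \<Rightarrow> real^'d" where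
  "diag_inv_apply D x = (\<chi> i. x $ i / D $ i)"

definition wnorm_sq :: "real^'d \<Rightarrow> real^'d \<Rightarrow> real" where
  "wnorm_sq D x = (\<Sum>i\<in>UNIV. D $ i * (x $ i)\<^sup>2)"

definition wnorm_inv_sq :: "real^'d \<Rightarrow> real^'d \<Rightarrow> real" where
  "wnorm_inv_sq D x = (\<Sum>i\<in>UNIV. (x $ i)\<^sup>2 / D $ i)"

definition rademacher :: "real^'d \<Rightarrow> bool" where
  "rademacher z \<longleftrightarrow> (\<forall>i. z $ i = 1 \<or> z $ i = -1)"

end

theory Submission
  imports Defs
begin

text \<open>The estimate is a deterministic one-step bound: it holds for every direction \<open>v\<^sub>t\<close>,
  whatever the SARAH recursion for \<open>v\<^sub>t\<close> and the Hutchinson-type update of \<open>D\<^sub>t\<close>, because only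
  \<open>(\<hat>D\<^sub>t)\<^sub>i\<^sub>i \<ge> \<alpha>\<close> is used. The descent lemma \<open>P(x + d) \<le> P x + \<nabla>P(x)\<cdot>d + L/2 \<parallel>d\<parallel>\<^sup>2\<close> reduces it
  to a scalar inequality per coordinate, where \<open>d\<^sub>i = -\<eta> v\<^sub>i / a\<^sub>i\<close> and the polarisation
  \<open>-2 g v = (g - v)\<^sup>2 - g\<^sup>2 - v\<^sup>2\<close> produces the three terms; replacing \<open>a\<^sub>i\<close> by its lower bound \<open>\<alpha>\<close> in
  the gradient-error and smoothness terms only weakens the bound.\<close>

lemma lipschitz_gradient_upper_bound:
  fixes P :: "'a::real_inner \<Rightarrow> real" and G :: "'a \<Rightarrow> 'a"
  assumes dP: "\<And>x. (P has_derivative (\<lambda>h. G x \<bullet> h)) (at x)"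
    and lip: "\<And>x y. norm (G x - G y) \<le> L * norm (x - y)"
  shows "P (x + d) \<le> P x + G x \<bullet> d + L / 2 * (norm d)\<^sup>2"
proof -
  define \<phi> where "\<phi> s = P (x + s *\<^sub>R d) - s * (G x \<bullet> d) - L / 2 * s\<^sup>2 * (norm d)\<^sup>2" for s :: real
  have "\<phi> 1 \<le> \<phi> 0"
  proof (rule DERIV_nonpos_imp_nonincreasing[of 0 1])
    fix s :: real
    assume s: "0 \<le> s" "s \<le> 1"
    have "((\<lambda>s. x + s *\<^sub>R d) has_derivative (\<lambda>h. h *\<^sub>R d)) (at s)"
      by (auto intro!: derivative_eq_intros)
    from has_derivative_compose[OF this dP]
    have P_deriv: "((\<lambda>s. P (x + s *\<^sub>R d)) has_real_derivative G (x + s *\<^sub>R d) \<bullet> d) (at s)"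
      unfolding has_field_derivative_def by (simp add: o_def mult.commute[of _ "G (x + s *\<^sub>R d) \<bullet> d"])
    have \<phi>_deriv: "(\<phi> has_real_derivative
        G (x + s *\<^sub>R d) \<bullet> d - G x \<bullet> d - L / 2 * (2 * s) * (norm d)\<^sup>2) (at s)"
      unfolding \<phi>_def[abs_def] by (rule derivative_eq_intros P_deriv | simp)+
    have "G (x + s *\<^sub>R d) \<bullet> d - G x \<bullet> d = (G (x + s *\<^sub>R d) - G x) \<bullet> d"
      by (simp add: inner_diff_left)
    also have "\<dots> \<le> norm (G (x + s *\<^sub>R d) - G x) * norm d"
      by (rule norm_cauchy_schwarz)
    also have "\<dots> \<le> L * norm (s *\<^sub>R d) * norm d"
      using lip[of "x + s *\<^sub>R d" x] by (simp add: mult_right_mono)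
    also have "\<dots> = L * s * (norm d)\<^sup>2"
      using s by (simp add: power2_eq_square)
    finally show "\<exists>y. (\<phi> has_real_derivative y) (at s) \<and> y \<le> 0"
      using \<phi>_deriv by auto
  qed simp
  then show ?thesis
    unfolding \<phi>_def by simp
qed

lemma lipschitz_constant_nonneg:
  fixes G :: "'a::euclidean_space \<Rightarrow> 'b::real_normed_vector"
  assumes lip: "\<And>x y. norm (G x - G y) \<le> L * norm (x - y)"
  shows "0 \<le> L"
proof -
  obtain b :: 'a where b: "b \<in> Basis"
    using nonempty_Basis by blast
  have "0 \<le> L * norm (0 - b)"
    using lip[of 0 b] norm_ge_zero order_trans by blast
  with b show ?thesis
    by simp
qed

lemma power2_norm_vec:
  fixes x :: "real^'n"
  shows "(norm x)\<^sup>2 = (\<Sum>i\<in>UNIV. (x $ i)\<^sup>2)"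
  unfolding power2_norm_eq_inner inner_vec_def by (simp add: power2_eq_square)

lemma clipD_ge: "\<alpha> \<le> clipD \<alpha> D $ i"
  unfolding clipD_def by simp

lemma scaled_step_coordinate_bound:
  fixes a g v d L \<eta> \<alpha> :: real
  assumes d: "d = - (\<eta> * v / a)"
    and a: "\<alpha> \<le> a" and \<alpha>: "0 < \<alpha>" and L: "0 \<le> L" and \<eta>: "0 < \<eta>"
  shows "g * d + L / 2 * d\<^sup>2 \<le> \<eta> / (2 * \<alpha>) * (g - v)\<^sup>2
     - (1 / (2 * \<eta>) - L / (2 * \<alpha>)) * (a * d\<^sup>2) - \<eta> / 2 * (g\<^sup>2 / a)"
proof -
  have a_pos: "0 < a"
    using a \<alpha> by linarith
  have polarisation: "g * d = \<eta> / (2 * a) * (g - v)\<^sup>2 - \<eta> / 2 * (g\<^sup>2 / a) - a * d\<^sup>2 / (2 * \<eta>)"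
    using a_pos \<eta> unfolding d by (simp add: field_simps power2_eq_square)
  have "\<eta> / (2 * a) * (g - v)\<^sup>2 \<le> \<eta> / (2 * \<alpha>) * (g - v)\<^sup>2"
    using a \<alpha> \<eta> by (intro mult_right_mono divide_left_mono) auto
  moreover have "L / 2 * d\<^sup>2 \<le> L / (2 * \<alpha>) * (a * d\<^sup>2)"
  proof -
    have "L / 2 * d\<^sup>2 = L / (2 * a) * (a * d\<^sup>2)"
      using a_pos by simp
    also have "\<dots> \<le> L / (2 * \<alpha>) * (a * d\<^sup>2)"
      using a \<alpha> L a_pos by (intro mult_right_mono divide_left_mono) auto
    finally show ?thesis .
  qed
  ultimately show ?thesis
    unfolding polarisation by (simp add: algebra_simps)
qed

lemma scaled_gradient_step_descent:
  fixes P :: "real^'d \<Rightarrow> real" and G :: "real^'d \<Rightarrow> real^'d" and a x x' v :: "real^'d"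
  assumes dP: "\<And>x. (P has_derivative (\<lambda>h. G x \<bullet> h)) (at x)"
    and lip: "\<And>x y. norm (G x - G y) \<le> L * norm (x - y)"
    and step: "x' = x - \<eta> *\<^sub>R diag_inv_apply a v"
    and a: "\<And>i. \<alpha> \<le> a $ i" and \<alpha>: "0 < \<alpha>" and \<eta>: "0 < \<eta>"
  shows "P x' \<le> P x + \<eta> / (2 * \<alpha>) * (norm (G x - v))\<^sup>2
           - (1 / (2 * \<eta>) - L / (2 * \<alpha>)) * wnorm_sq a (x' - x)
           - \<eta> / 2 * wnorm_inv_sq a (G x)"
proof -
  define d where "d = x' - x"
  have d_coord: "d $ i = - (\<eta> * v $ i / a $ i)" for i
    unfolding d_def step diag_inv_apply_def by simp
  have descent: "P x' \<le> P x + (G x \<bullet> d + L / 2 * (norm d)\<^sup>2)"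
    using lipschitz_gradient_upper_bound[OF dP lip, of x d] unfolding d_def by simp
  have "G x \<bullet> d + L / 2 * (norm d)\<^sup>2 = (\<Sum>i\<in>UNIV. G x $ i * d $ i + L / 2 * (d $ i)\<^sup>2)"
    by (simp add: power2_norm_vec inner_vec_def sum.distrib sum_distrib_left)
  also have "\<dots> \<le> (\<Sum>i\<in>UNIV. \<eta> / (2 * \<alpha>) * (G x $ i - v $ i)\<^sup>2
       - (1 / (2 * \<eta>) - L / (2 * \<alpha>)) * (a $ i * (d $ i)\<^sup>2) - \<eta> / 2 * ((G x $ i)\<^sup>2 / a $ i))"
    using scaled_step_coordinate_bound[OF d_coord a \<alpha> lipschitz_constant_nonneg[OF lip] \<eta>]
    by (rule sum_mono)
  also have "\<dots> = \<eta> / (2 * \<alpha>) * (norm (G x - v))\<^sup>2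
       - (1 / (2 * \<eta>) - L / (2 * \<alpha>)) * wnorm_sq a d - \<eta> / 2 * wnorm_inv_sq a (G x)"
    by (simp add: power2_norm_vec sum_subtractf sum_distrib_left wnorm_sq_def wnorm_inv_sq_def)
  finally show ?thesis
    using descent unfolding d_def by linarith
qed

theorem lemma2:
  fixes n m :: nat
    and f :: "nat \<Rightarrow> real^'d \<Rightarrow> real"
    and g :: "nat \<Rightarrow> real^'d \<Rightarrow> real^'d"
    and H :: "nat \<Rightarrow> real^'d \<Rightarrow> real^'d^'d"
    and L \<alpha> \<beta> \<eta> p :: real
    and w v D :: "nat \<Rightarrow> real^'d"
    and z0 :: "nat \<Rightarrow> real^'d" and J0 :: "nat \<Rightarrow> nat set"
    and z :: "nat \<Rightarrow> real^'d" and J :: "nat \<Rightarrow> nat set"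
    and idx :: "nat \<Rightarrow> nat" and coin :: "nat \<Rightarrow> bool"
  assumes n_pos: "n \<ge> 1"
    and grad_f: "\<And>i x. i < n \<Longrightarrow> (f i has_derivative (\<lambda>h. g i x \<bullet> h)) (at x)"
    and hess_f: "\<And>i x. i < n \<Longrightarrow> (g i has_derivative (\<lambda>h. H i x *v h)) (at x)"
    and lip_f: "\<And>i x y. i < n \<Longrightarrow> norm (g i x - g i y) \<le> L * norm (x - y)"
    and grad_P: "\<And>x. (Pfun n f has_derivative (\<lambda>h. gradP n g x \<bullet> h)) (at x)"
    and hess_P: "\<And>x. (gradP n g has_derivative
                   (\<lambda>h. ((1 / real n) *\<^sub>R (\<Sum>i<n. H i x)) *v h)) (at x)"
    and lip_P: "\<And>x y. norm (gradP n g x - gradP n g y) \<le> L * norm (x - y)"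
    and \<alpha>_pos: "\<alpha> > 0" and \<beta>_range: "0 < \<beta>" "\<beta> < 1" and m_pos: "m \<ge> 1"
    and p_range: "0 < p" "p \<le> 1"
    and \<eta>_pos: "\<eta> > 0"
    and z0_rad: "\<And>j. rademacher (z0 j)"
    and J0_sub: "\<And>j. J0 j \<subseteq> {..<n} \<and> J0 j \<noteq> {}"
    and z_rad: "\<And>t. rademacher (z t)"
    and J_sub: "\<And>t. J t \<subseteq> {..<n} \<and> J t \<noteq> {}"
    and idx_range: "\<And>t. idx t < n"
    and D0: "D 0 = (1 / real m) *\<^sub>R
               (\<Sum>j\<in>{1..m}. hadamard (z0 j) (hessJ H (J0 j) (w 0) *v z0 j))"
    and D_step: "\<And>t. D (Suc t) = \<beta> *\<^sub>R D t + (1 - \<beta>) *\<^sub>R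
               hadamard (z (Suc t)) (hessJ H (J (Suc t)) (w (Suc t)) *v z (Suc t))"
    and v0: "v 0 = gradP n g (w 0)"
    and w_step: "\<And>t. w (Suc t) = w t - \<eta> *\<^sub>R diag_inv_apply (clipD \<alpha> (D t)) (v t)"
    and v_step: "\<And>t. v (Suc t) = (if coin (Suc t) then gradP n g (w (Suc t))
               else v t + g (idx (Suc t)) (w (Suc t)) - g (idx (Suc t)) (w t))"
  shows "\<forall>t. Pfun n f (w (Suc t)) \<le> Pfun n f (w t)
           + \<eta> / (2 * \<alpha>) * (norm (gradP n g (w t) - v t))\<^sup>2
           - (1 / (2 * \<eta>) - L / (2 * \<alpha>)) * wnorm_sq (clipD \<alpha> (D t)) (w (Suc t) - w t)
           - \<eta> / 2 * wnorm_inv_sq (clipD \<alpha> (D t)) (gradP n g (w t))"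
  by (intro allI scaled_gradient_step_descent[OF grad_P lip_P w_step clipD_ge \<alpha>_pos \<eta>_pos])

end
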